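(* Let $\alpha\in(0,1)$ be irrational with $\alpha=[0;a_1,a_2,\dots]$. For each $n\ge1$ define the block $C_n$ by: if $a_n\ge2$, $C_n=(q_{n-2}+q_{n-1},\,q_{n-2}+2q_{n-1},\,\dots,\,q_{n-2}+(a_n-1)q_{n-1})$ (the $a_n-1$ numbers $q_{n-2}+jq_{n-1}$, $1\le j\le a_n-1$); if $a_n=1$, $C_n=(2q_{n-2}+q_{n-1})$. Then the concatenation $C_1,C_2,C_3,\dots$, after deleting repeated values, is exactly the increasing enumeration $\mathfrak x_1=1<\mathfrak x_2<\cdots$ of $\mathfrak X$.
   Context: Let $\alpha$ be an irrational real number in $(0,1)$ with continued fraction expansion $\alpha=[0;a_1,a_2,\dots]$ (the $a_i$ positive integers). Convergents: $p_n/q_n=[0;a_1,\dots,a_n]$ for $n\ge1$, with $p_{-1}=1,q_{-1}=0,p_0=0,q_0=1$, so that $q_n=a_nq_{n-1}+q_{n-2}$ and $p_n=a_np_{n-1}+p_{n-2}$. For real $t\ge1$ define $\psi^{[2]*}_\alpha(t)=\min\{|q\alpha-p| : p,q\in\mathbb Z,\ 1\le q\le t,\ p/q\ne p_n/q_n\text{ for all }n\ge0\}$. Let $\mathfrak X$ be the set consisting of $1$ together with all integers $t\ge2$ such that $\psi^{[2]*}_\alpha(t)<\psi^{[2]*}_\alpha(t-1)$ (the points of discontinuity of $\psi^{[2]*}_\alpha$), enumerated increasingly as $\mathfrak x_1=1<\mathfrak x_2<\cdots$. *)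

theory Defs
  imports Complex_Main "HOL-Library.Stream" "HOL-Library.Infinite_Set"
begin

text \<open>Continued fraction expansion via the Gauss map:
  cf_rem x 0 = x, cf_rem x (n+1) = frac (1 / cf_rem x n);
  the partial quotients are a_n = floor (1 / cf_rem x (n-1)) for n >= 1,
  so that x = [0; a_1, a_2, ...] for irrational x in (0,1).\<close>

fun cf_rem :: "real \<Rightarrow> nat \<Rightarrow> real" where
  "cf_rem x 0 = x"
| "cf_rem x (Suc n) = frac (1 / cf_rem x n)"

definition cf_a :: "real \<Rightarrow> nat \<Rightarrow> nat" where
  "cf_a x n = nat \<lfloor>1 / cf_rem x (n - 1)\<rfloor>"

text \<open>Shifted indexing: cf_qs x k = q_(k-1) and cf_ps x k = p_(k-1),
  so cf_qs x 0 = q_(-1) = 0, cf_qs x 1 = q_0 = 1, cf_ps x 0 = p_(-1) = 1, cf_ps x 1 = p_0 = 0.\<close>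

fun cf_qs :: "real \<Rightarrow> nat \<Rightarrow> nat" where
  "cf_qs x 0 = 0"
| "cf_qs x (Suc 0) = 1"
| "cf_qs x (Suc (Suc n)) = cf_a x (Suc n) * cf_qs x (Suc n) + cf_qs x n"

fun cf_ps :: "real \<Rightarrow> nat \<Rightarrow> nat" where
  "cf_ps x 0 = 1"
| "cf_ps x (Suc 0) = 0"
| "cf_ps x (Suc (Suc n)) = cf_a x (Suc n) * cf_ps x (Suc n) + cf_ps x n"

definition cf_q :: "real \<Rightarrow> nat \<Rightarrow> nat" where "cf_q x n = cf_qs x (Suc n)"
definition cf_p :: "real \<Rightarrow> nat \<Rightarrow> nat" where "cf_p x n = cf_ps x (Suc n)"

definition psi2star :: "real \<Rightarrow> real \<Rightarrow> real" where
  "psi2star \<alpha> t = Inf {\<bar>real_of_int q * \<alpha> - real_of_int p\<bar> | p q :: int.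
      1 \<le> q \<and> real_of_int q \<le> t \<and>
      (\<forall>n. real_of_int p / real_of_int q \<noteq> real (cf_p \<alpha> n) / real (cf_q \<alpha> n))}"

definition frakX :: "real \<Rightarrow> nat set" where
  "frakX \<alpha> = {1} \<union> {t. 2 \<le> t \<and> psi2star \<alpha> (real t) < psi2star \<alpha> (real t - 1)}"

text \<open>The block C_n (n >= 1); q_(n-2) = cf_qs x (n-1), q_(n-1) = cf_qs x n.\<close>
definition block_C :: "real \<Rightarrow> nat \<Rightarrow> nat list" where
  "block_C x n = (if 2 \<le> cf_a x n
     then map (\<lambda>j. cf_qs x (n - 1) + j * cf_qs x n) [1..<cf_a x n]
     else [2 * cf_qs x (n - 1) + cf_qs x n])"

text \<open>The concatenation C_1, C_2, C_3, ... as an infinite sequence (index 0 = first element).\<close>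
definition concat_C :: "real \<Rightarrow> nat \<Rightarrow> nat" where
  "concat_C x k = flat (smap (block_C x) (fromN 1)) !! k"

text \<open>Indices of first occurrences (deleting repeated values keeps first occurrences).\<close>
definition first_occ :: "(nat \<Rightarrow> nat) \<Rightarrow> nat set" where
  "first_occ s = {j. s j \<notin> s ` {..<j}}"

end

theory Submission
  imports Defs
begin

text \<open>Write \<open>v_n = (p_n, q_n)\<close> and \<open>\<delta>_n = |q_n \<alpha> - p_n|\<close>, so that
  \<open>\<delta>_(n-1) = a_(n+1) \<delta>_n + \<delta>_(n+1)\<close>. Euclid's algorithm writes every lattice point \<open>(p, q)\<close>
  with \<open>p, q \<ge> 1\<close> as \<open>s v_(m-1) + t v_m\<close> with \<open>s, t \<ge> 1\<close> and \<open>t \<le> a_(m+1) s\<close>; then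
  \<open>|q \<alpha> - p| = s \<delta>_(m-1) - t \<delta>_m\<close>, and equality \<open>t = a_(m+1) s\<close> means that \<open>p/q\<close> is a
  convergent. Otherwise the point is dominated, in denominator as well as in distance, by an
  entry of the block \<open>C_(m+1)\<close>, and these entries are themselves not convergents. Along the
  concatenation \<open>C_1, C_2, \<dots>\<close> the denominators increase weakly while the distances decrease
  strictly, so \<open>\<psi>(t)\<close> is the distance attached to the last entry not exceeding \<open>t\<close>, and \<open>\<psi>\<close>
  jumps exactly at the values of the concatenation.\<close>

lemma snth_flat_smap_fromN:
  assumes nonempty: "\<And>j. f j \<noteq> []" and i: "i < length (f (N + n))"
  shows "flat (smap f (fromN N)) !! ((\<Sum>j<n. length (f (N + j))) + i) = f (N + n) ! i"
  using i
proof (induction n arbitrary: N)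
  case 0
  have "\<forall>xs \<in> sset (smap f (fromN N)). xs \<noteq> []" using nonempty by (auto simp: stream.set_map)
  then show ?case using 0 by (simp add: flat_snth)
next
  case (Suc n)
  have ne: "\<forall>xs \<in> sset (smap f (fromN N)). xs \<noteq> []" using nonempty by (auto simp: stream.set_map)
  have sum: "(\<Sum>j<Suc n. length (f (N + j))) = length (f N) + (\<Sum>j<n. length (f (Suc N + j)))"
    by (subst sum.lessThan_Suc_shift) simp
  have "flat (smap f (fromN N)) !! ((\<Sum>j<Suc n. length (f (N + j))) + i)
      = flat (smap f (fromN (Suc N))) !! ((\<Sum>j<n. length (f (Suc N + j))) + i)"
    unfolding sum add.assoc using ne by (simp add: flat_snth)
  also have "\<dots> = f (Suc N + n) ! i"
    using Suc.IH[of "Suc N"] Suc.prems by simp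
  finally show ?case by simp
qed

section \<open>Enumerating the distinct values of a monotone sequence\<close>

lemma enumerate_range_strict_mono:
  fixes f :: "nat \<Rightarrow> 'a::wellorder"
  assumes sm: "strict_mono f"
  shows "enumerate (range f) n = f n"
proof (induction n)
  case 0
  show ?case unfolding enumerate_0
  proof (rule Least_equality)
    show "f 0 \<le> y" if "y \<in> range f" for y
      using that sm by (auto simp: strict_mono_less_eq)
  qed simp
next
  case (Suc n)
  have inf: "infinite (range f)"
    using sm by (simp add: strict_mono_imp_inj_on finite_image_iff)
  show ?case unfolding enumerate_Suc''[OF inf] Suc
  proof (rule Least_equality)
    show "f (Suc n) \<le> y" if "y \<in> range f \<and> f n < y" for y
      using that sm by (auto simp: strict_mono_less strict_mono_less_eq)
  qed (use sm in \<open>simp add: strict_mono_less\<close>)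
qed

lemma value_at_Least:
  fixes s :: "nat \<Rightarrow> 'a"
  assumes "v \<in> range s"
  shows "s (LEAST j. s j = v) = v"
proof -
  from assms obtain k where "s k = v" by auto
  then show ?thesis by (rule LeastI)
qed

lemma Least_in_first_occ:
  assumes "v \<in> range s"
  shows "(LEAST j. s j = v) \<in> first_occ s"
proof -
  have "v \<notin> s ` {..<(LEAST j. s j = v)}"
    using not_less_Least by fastforce
  then show ?thesis using value_at_Least[OF assms] by (simp add: first_occ_def)
qed

lemma infinite_first_occ:
  assumes "infinite (range s)"
  shows "infinite (first_occ s)"
proof
  assume fin: "finite (first_occ s)"
  let ?first = "\<lambda>v. LEAST j. s j = v"
  have "?first ` range s \<subseteq> first_occ s" using Least_in_first_occ by blast
  then have "finite (?first ` range s)" using fin by (rule finite_subset)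
  moreover have "inj_on ?first (range s)"
    by (rule inj_on_inverseI[where g = s]) (rule value_at_Least)
  ultimately have "finite (range s)" by (rule finite_imageD)
  with assms show False by simp
qed

lemma enumerate_first_occ_mono:
  fixes s :: "nat \<Rightarrow> nat"
  assumes mono: "mono s" and inf: "infinite (range s)"
  shows "s (enumerate (first_occ s) k) = enumerate (range s) k"
proof -
  let ?e = "enumerate (first_occ s)"
  have inf_F: "infinite (first_occ s)" using inf by (rule infinite_first_occ)
  have "strict_mono (s \<circ> ?e)"
  proof (rule strict_monoI)
    fix i j :: nat assume "i < j"
    then have lt: "?e i < ?e j" using inf_F by simp
    have "?e j \<in> first_occ s" using inf_F by (rule enumerate_in_set)
    moreover have "s (?e i) \<in> s ` {..<?e j}" using lt by simp
    ultimately have "s (?e i) \<noteq> s (?e j)" by (auto simp: first_occ_def)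
    moreover have "s (?e i) \<le> s (?e j)" using lt mono by (simp add: monoD)
    ultimately show "(s \<circ> ?e) i < (s \<circ> ?e) j" by simp
  qed
  moreover have "range (s \<circ> ?e) = range s"
  proof (intro equalityI subsetI)
    fix v assume v: "v \<in> range s"
    obtain n where "?e n = (LEAST j. s j = v)"
      using enumerate_Ex[OF inf_F Least_in_first_occ[OF v]] by blast
    moreover have "s (LEAST j. s j = v) = v" using v by (rule value_at_Least)
    ultimately have "v = (s \<circ> ?e) n" by simp
    then show "v \<in> range (s \<circ> ?e)" by (rule range_eqI)
  qed auto
  ultimately show ?thesis using enumerate_range_strict_mono[of "s \<circ> ?e" k] by simp
qed

section \<open>The Gauss map and the errors of the convergents\<close>

locale irrational_cf =
  fixes \<alpha> :: real
  assumes irrational: "\<alpha> \<notin> \<rat>" and pos: "0 < \<alpha>" and less_1: "\<alpha> < 1"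
begin

abbreviation "r \<equiv> cf_rem \<alpha>"
abbreviation "a \<equiv> cf_a \<alpha>"
abbreviation "qs \<equiv> cf_qs \<alpha>"
abbreviation "ps \<equiv> cf_ps \<alpha>"

lemma rem_bounds: "0 < r n \<and> r n < 1 \<and> r n \<notin> \<rat>"
proof (induction n)
  case 0
  then show ?case using irrational pos less_1 by simp
next
  case (Suc n)
  then have "1 / r n \<notin> \<rat>"
    by (metis Rats_inverse inverse_eq_divide inverse_inverse_eq)
  have "frac (1 / r n) \<notin> \<rat>"
  proof
    assume "frac (1 / r n) \<in> \<rat>"
    then have "frac (1 / r n) + of_int \<lfloor>1 / r n\<rfloor> \<in> \<rat>" by simp
    with \<open>1 / r n \<notin> \<rat>\<close> show False by (simp add: frac_def)
  qed
  moreover have "frac (1 / r n) \<noteq> 0" using calculation by (metis Rats_0)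
  ultimately show ?case by (simp add: frac_lt_1 order_le_neq_trans[OF frac_ge_0])
qed

lemma rem_pos: "0 < r n" and rem_less_1: "r n < 1" and rem_irrational: "r n \<notin> \<rat>"
  using rem_bounds by auto

lemma floor_inverse_rem_ge_1: "1 \<le> \<lfloor>1 / r n\<rfloor>"
  using rem_pos[of n] rem_less_1[of n] by (simp add: le_floor_iff)

lemma a_Suc_add_rem: "real (a (Suc n)) + r (Suc n) = 1 / r n"
proof -
  have "0 \<le> \<lfloor>1 / r n\<rfloor>" using floor_inverse_rem_ge_1[of n] by linarith
  then show ?thesis by (simp add: cf_a_def frac_def)
qed

lemma a_Suc_ge_1: "1 \<le> a (Suc n)"
proof -
  have "nat 1 \<le> nat \<lfloor>1 / r n\<rfloor>" using floor_inverse_rem_ge_1[of n] by (rule nat_mono)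
  then show ?thesis by (simp add: cf_a_def)
qed

text \<open>\<open>err n = |q_(n-1) \<alpha> - p_(n-1)|\<close>, by \<open>qs_alpha_minus_ps\<close>.\<close>

definition err :: "nat \<Rightarrow> real" where
  "err n = (\<Prod>i<n. r i)"

lemma err_0 [simp]: "err 0 = 1" and err_Suc: "err (Suc n) = err n * r n"
  by (simp_all add: err_def)

lemma err_pos: "0 < err n"
  by (induction n) (simp_all add: err_Suc rem_pos)

lemma err_Suc_less: "err (Suc n) < err n"
  using err_pos[of n] rem_less_1[of n] rem_pos[of n] by (simp add: err_Suc)

lemma err_rec: "err n = real (a (Suc n)) * err (Suc n) + err (Suc (Suc n))"
proof -
  have "r n * (real (a (Suc n)) + r (Suc n)) = 1"
    using a_Suc_add_rem[of n] rem_pos[of n] by simp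
  then have "err n * (r n * (real (a (Suc n)) + r (Suc n))) = err n" by simp
  then show ?thesis by (simp add: err_Suc algebra_simps)
qed

lemma err_antimono: "m \<le> n \<Longrightarrow> err n \<le> err m"
  by (induction n rule: dec_induct) (auto intro: order.trans[OF less_imp_le[OF err_Suc_less]])

lemma err_strict_antimono: "m < n \<Longrightarrow> err n < err m"
  by (metis err_antimono err_Suc_less Suc_leI order_le_less_trans)

lemma qs_alpha_minus_ps: "real (qs n) * \<alpha> - real (ps n) = (-1) ^ Suc n * err n"
proof (induction n rule: induct_nat_012)
  case (ge2 n)
  have "real (qs (Suc (Suc n))) * \<alpha> - real (ps (Suc (Suc n))) =
     real (a (Suc n)) * (real (qs (Suc n)) * \<alpha> - real (ps (Suc n))) + (real (qs n) * \<alpha> - real (ps n))"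
    by (simp add: algebra_simps)
  also have "\<dots> = real (a (Suc n)) * ((-1) ^ Suc (Suc n) * err (Suc n)) + (-1) ^ Suc n * err n"
    using ge2 by simp
  also have "\<dots> = (-1) ^ Suc (Suc (Suc n)) * (err n - real (a (Suc n)) * err (Suc n))"
    by (simp add: algebra_simps)
  also have "err n - real (a (Suc n)) * err (Suc n) = err (Suc (Suc n))"
    using err_rec[of n] by simp
  finally show ?case .
qed (simp_all add: err_Suc)

lemma qs_le_Suc: "qs n \<le> qs (Suc n)"
proof (cases n)
  case (Suc m)
  then show ?thesis using a_Suc_ge_1[of m] by (simp add: trans_le_add1)
qed simp

lemma qs_mono: "m \<le> n \<Longrightarrow> qs m \<le> qs n"
  by (induction n rule: dec_induct) (auto intro: order.trans[OF _ qs_le_Suc])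

lemma qs_Suc_ge_1: "1 \<le> qs (Suc n)"
  using qs_mono[of 1 "Suc n"] by simp

lemma ps_qs_det: "int (ps (Suc n)) * int (qs n) - int (ps n) * int (qs (Suc n)) = (-1) ^ Suc n"
  by (induction n) (simp_all add: algebra_simps)

lemma coprime_ps_qs: "coprime (int (ps n)) (int (qs n))"
proof (rule coprimeI)
  fix d assume "d dvd int (ps n)" "d dvd int (qs n)"
  then have "d dvd int (ps (Suc n)) * int (qs n) - int (ps n) * int (qs (Suc n))" by simp
  then have "d dvd (-1) ^ Suc n" by (simp only: ps_qs_det)
  moreover have "is_unit ((-1::int) ^ Suc n)" by simp
  ultimately show "is_unit d" by (rule dvd_unit_imp_unit)
qed

definition non_convergent :: "int \<Rightarrow> int \<Rightarrow> bool" where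
  "non_convergent p q \<longleftrightarrow> (\<forall>n. real_of_int p / real_of_int q \<noteq> real (cf_p \<alpha> n) / real (cf_q \<alpha> n))"

lemma convergent_fraction_multiple:
  fixes p q :: int
  assumes q: "1 \<le> q" and eq: "real_of_int p / real_of_int q = real (ps (Suc k)) / real (qs (Suc k))"
  obtains c where "1 \<le> c" "q = c * int (qs (Suc k))" "p = c * int (ps (Suc k))"
proof -
  have qk: "1 \<le> qs (Suc k)" by (rule qs_Suc_ge_1)
  from eq q qk have "real_of_int p * real (qs (Suc k)) = real (ps (Suc k)) * real_of_int q"
    by (simp add: field_simps)
  then have cross: "p * int (qs (Suc k)) = int (ps (Suc k)) * q"
    by (metis of_int_eq_iff of_int_mult of_int_of_nat_eq)
  then have "int (qs (Suc k)) dvd q"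
    using coprime_ps_qs[of "Suc k"] by (metis coprime_commute coprime_dvd_mult_right_iff dvd_triv_right)
  then obtain c where c: "q = c * int (qs (Suc k))" by (metis dvd_def mult.commute)
  with q qk have "1 \<le> c" by (smt (verit) mult_nonpos_nonneg of_nat_0_le_iff)
  moreover have "p = c * int (ps (Suc k))" using cross c qk by (simp add: algebra_simps)
  ultimately show ?thesis using c that by blast
qed

lemma dist_of_convergent_multiple:
  fixes p q :: int
  assumes q: "1 \<le> q" and "\<not> non_convergent p q"
  obtains k c where "1 \<le> c" "q = c * int (qs (Suc k))"
    "\<bar>real_of_int q * \<alpha> - real_of_int p\<bar> = real_of_int c * err (Suc k)"
proof -
  from assms(2) obtain k where "real_of_int p / real_of_int q = real (ps (Suc k)) / real (qs (Suc k))"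
    by (auto simp: non_convergent_def cf_p_def cf_q_def)
  with q obtain c where c: "1 \<le> c" "q = c * int (qs (Suc k))" "p = c * int (ps (Suc k))"
    by (rule convergent_fraction_multiple)
  have "real_of_int q * \<alpha> - real_of_int p = real_of_int c * (real (qs (Suc k)) * \<alpha> - real (ps (Suc k)))"
    using c by (simp add: algebra_simps)
  then have "\<bar>real_of_int q * \<alpha> - real_of_int p\<bar> = real_of_int c * err (Suc k)"
    using c(1) err_pos[of "Suc k"] by (simp add: qs_alpha_minus_ps abs_mult)
  with c show ?thesis using that by blast
qed

lemma not_int_multiple_between:
  fixes c :: int and x y :: real
  assumes "0 < y" "y < x" "y = real_of_int c * x"
  shows False
proof -
  have "0 < real_of_int c" "real_of_int c < 1"
    using assms by (auto simp: zero_less_mult_iff mult_less_cancel_right2)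
  then show False by simp
qed

lemma lattice_dist:
  assumes "real t * err (Suc m) \<le> real s * err m"
  shows "\<bar>real (s * qs m + t * qs (Suc m)) * \<alpha> - real (s * ps m + t * ps (Suc m))\<bar>
     = real s * err m - real t * err (Suc m)"
proof -
  have "real (s * qs m + t * qs (Suc m)) * \<alpha> - real (s * ps m + t * ps (Suc m))
     = real s * (real (qs m) * \<alpha> - real (ps m)) + real t * (real (qs (Suc m)) * \<alpha> - real (ps (Suc m)))"
    by (simp add: algebra_simps)
  also have "\<dots> = (-1) ^ Suc m * (real s * err m - real t * err (Suc m))"
    by (simp only: qs_alpha_minus_ps) (simp add: algebra_simps)
  finally show ?thesis using assms by (simp add: abs_mult)
qed

section \<open>Intermediate fractions that are not convergents\<close>

lemma intermediate_dist:
  assumes "j \<le> a (Suc m)"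
  shows "\<bar>real (qs m + j * qs (Suc m)) * \<alpha> - real (ps m + j * ps (Suc m))\<bar>
     = err m - real j * err (Suc m)"
proof -
  have "real j * err (Suc m) \<le> real (a (Suc m)) * err (Suc m)"
    using assms err_pos[of "Suc m"] by (intro mult_right_mono) auto
  also have "\<dots> \<le> real 1 * err m" using err_rec[of m] err_pos[of "Suc (Suc m)"] by simp
  finally show ?thesis using lattice_dist[of j m 1] by simp
qed

text \<open>A multiple \<open>c v_k\<close> of a convergent with the same distance \<open>err m - j err (m+1)\<close> would either
  be too close (\<open>k < m\<close>), force \<open>err (m+2)\<close> to be an integral multiple of \<open>err (m+1)\<close>
  (\<open>k = m\<close>), or have too large a denominator (\<open>k > m\<close>).\<close>

lemma intermediate_non_convergent:
  assumes j: "1 \<le> j" "j < a (Suc m)"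
  shows "non_convergent (int (ps m + j * ps (Suc m))) (int (qs m + j * qs (Suc m)))"
proof (rule ccontr)
  let ?p = "int (ps m + j * ps (Suc m))" and ?q = "int (qs m + j * qs (Suc m))"
  let ?d = "err m - real j * err (Suc m)"
  assume "\<not> non_convergent ?p ?q"
  moreover have "1 \<le> ?q" using mult_le_mono[OF j(1) qs_Suc_ge_1[of m]] by linarith
  ultimately obtain k c where kc: "1 \<le> c" "?q = c * int (qs (Suc k))"
    "\<bar>real_of_int ?q * \<alpha> - real_of_int ?p\<bar> = real_of_int c * err (Suc k)"
    using dist_of_convergent_multiple by blast
  have d: "real_of_int c * err (Suc k) = ?d" using kc(3) intermediate_dist[of j m] j by simp
  consider "Suc k \<le> m" | "k = m" | "Suc (Suc m) \<le> Suc k" by linarith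
  then show False
  proof cases
    case 1
    have "err m \<le> err (Suc k)" using 1 by (rule err_antimono)
    also have "\<dots> \<le> real_of_int c * err (Suc k)" using kc(1) err_pos[of "Suc k"] by simp
    moreover have "0 < real j * err (Suc m)" using j(1) err_pos[of "Suc m"] by simp
    ultimately show False using d by simp
  next
    case 2
    then have "err (Suc (Suc m)) = real_of_int (c + int j - int (a (Suc m))) * err (Suc m)"
      using d err_rec[of m] by (simp add: algebra_simps)
    then show False using not_int_multiple_between err_pos err_Suc_less by blast
  next
    case 3
    have "qs m + j * qs (Suc m) < qs (Suc (Suc m))"
      using j(2) qs_Suc_ge_1[of m] by simp
    also have "\<dots> \<le> qs (Suc k)" using 3 by (rule qs_mono)
    moreover have "1 * int (qs (Suc k)) \<le> c * int (qs (Suc k))" using kc(1) by (intro mult_right_mono) auto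
    ultimately show False using kc(2) by linarith
  qed
qed

lemma mediant_dist:
  "\<bar>real (2 * qs m + qs (Suc m)) * \<alpha> - real (2 * ps m + ps (Suc m))\<bar> = 2 * err m - err (Suc m)"
proof -
  have "real 1 * err (Suc m) \<le> real 2 * err m" using err_Suc_less[of m] err_pos[of m] by simp
  then show ?thesis using lattice_dist[of 1 m 2] by simp
qed

lemma mediant_non_convergent:
  assumes a1: "a (Suc m) = 1"
  shows "non_convergent (int (2 * ps m + ps (Suc m))) (int (2 * qs m + qs (Suc m)))"
proof (rule ccontr)
  let ?p = "int (2 * ps m + ps (Suc m))" and ?q = "int (2 * qs m + qs (Suc m))"
  assume "\<not> non_convergent ?p ?q"
  moreover have "1 \<le> ?q" using qs_Suc_ge_1[of m] by linarith
  ultimately obtain k c where kc: "1 \<le> c" "?q = c * int (qs (Suc k))"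
    "\<bar>real_of_int ?q * \<alpha> - real_of_int ?p\<bar> = real_of_int c * err (Suc k)"
    using dist_of_convergent_multiple by blast
  have d: "real_of_int c * err (Suc k) = 2 * err m - err (Suc m)" using kc(3) mediant_dist[of m] by simp
  have rec: "err m = err (Suc m) + err (Suc (Suc m))" using err_rec[of m] a1 by simp
  have c_err: "err (Suc k) \<le> real_of_int c * err (Suc k)" using kc(1) err_pos[of "Suc k"] by simp
  consider "Suc (Suc k) \<le> m" | "Suc k = m" | "k = m" | "Suc m \<le> k" by linarith
  then show False
  proof cases
    case 1
    then obtain m' where m': "m = Suc m'" "Suc k \<le> m'" by (cases m) auto
    have "err (Suc m') \<le> real (a (Suc m')) * err (Suc m')"
      using a_Suc_ge_1[of m'] err_pos[of "Suc m'"] by simp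
    then have "err m + err (Suc m) \<le> err m'" using err_rec[of m'] m'(1) by simp
    moreover have "err m' \<le> err (Suc k)" using m'(2) by (rule err_antimono)
    ultimately show False using d c_err rec err_Suc_less[of "Suc m"] by linarith
  next
    case 2
    then have "err (Suc (Suc m)) = real_of_int (c - 1) * err m" using d rec by (simp add: algebra_simps)
    moreover have "0 < err (Suc (Suc m))" "err (Suc (Suc m)) < err m"
      using err_pos err_strict_antimono[of m "Suc (Suc m)"] by auto
    ultimately show False using not_int_multiple_between[of "err (Suc (Suc m))" "err m" "c - 1"] by simp
  next
    case 3
    text \<open>Here \<open>c = 1 + 2 r (m+1)\<close>, impossible as the remainder is irrational.\<close>
    have "real_of_int c * err (Suc m) = err (Suc m) + 2 * err (Suc (Suc m))" using 3 d rec by simp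
    also have "\<dots> = err (Suc m) * (1 + 2 * r (Suc m))" by (simp add: err_Suc[of "Suc m"] algebra_simps)
    finally have "r (Suc m) = (real_of_int c - 1) / 2" using err_pos[of "Suc m"] by simp
    moreover have "(real_of_int c - 1) / 2 \<in> \<rat>" by simp
    ultimately show False using rem_irrational[of "Suc m"] by metis
  next
    case 4
    have q: "qs (Suc (Suc m)) = qs (Suc m) + qs m" using a1 by simp
    have q_le: "qs (Suc (Suc m)) \<le> qs (Suc k)" using 4 by (intro qs_mono) simp
    show False
    proof (cases "c = 1")
      case True
      have "err (Suc k) \<le> err (Suc (Suc m))" using 4 by (intro err_antimono) simp
      then show False using True d rec err_pos[of m] err_Suc_less[of m] by simp
    next
      case False
      then have "2 * int (qs (Suc k)) \<le> c * int (qs (Suc k))" using kc(1) by (intro mult_right_mono) auto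
      then show False using kc(2) q q_le qs_Suc_ge_1[of m] by linarith
    qed
  qed
qed

section \<open>The block entries dominate all non-convergents\<close>

text \<open>\<open>blk_q m i\<close> is the entry \<open>i\<close> (counted from 0) of the block \<open>C_(m+1)\<close> and \<open>blk_err m i\<close>
  the distance \<open>|q\<alpha> - p|\<close> of the corresponding intermediate fraction \<open>p/q\<close>.\<close>

definition blk_len :: "nat \<Rightarrow> nat" where
  "blk_len m = (if 2 \<le> a (Suc m) then a (Suc m) - 1 else 1)"

definition blk_q :: "nat \<Rightarrow> nat \<Rightarrow> nat" where
  "blk_q m i = (if 2 \<le> a (Suc m) then qs m + Suc i * qs (Suc m) else 2 * qs m + qs (Suc m))"

definition blk_err :: "nat \<Rightarrow> nat \<Rightarrow> real" where
  "blk_err m i = (if 2 \<le> a (Suc m) then err m - real (Suc i) * err (Suc m) else 2 * err m - err (Suc m))"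

lemma blk_len_pos: "0 < blk_len m"
  by (simp add: blk_len_def)

lemma blk_attained:
  assumes "i < blk_len m"
  shows "\<exists>p. non_convergent p (int (blk_q m i)) \<and> \<bar>real (blk_q m i) * \<alpha> - real_of_int p\<bar> = blk_err m i"
proof (cases "2 \<le> a (Suc m)")
  case True
  then have j: "1 \<le> Suc i" "Suc i < a (Suc m)" using assms by (auto simp: blk_len_def)
  show ?thesis
    using True intermediate_non_convergent[OF j] intermediate_dist[of "Suc i" m] j(2)
    by (intro exI[of _ "int (ps m + Suc i * ps (Suc m))"]) (simp add: blk_q_def blk_err_def)
next
  case False
  then have "a (Suc m) = 1" using a_Suc_ge_1[of m] by simp
  then show ?thesis
    using mediant_non_convergent mediant_dist[of m]
    by (intro exI[of _ "int (2 * ps m + ps (Suc m))"]) (simp add: blk_q_def blk_err_def)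
qed

text \<open>The reduction step of the Euclidean algorithm:
  \<open>s v_(n-1) + t v_n = (t - a_(n+1) s) v_n + s v_(n+1)\<close>, which decreases \<open>s + t\<close>.\<close>

lemma lattice_point_reduce:
  assumes "1 \<le> s" "1 \<le> t"
  shows "\<exists>m s' t'. 1 \<le> s' \<and> 1 \<le> t' \<and> t' \<le> a (Suc m) * s' \<and>
     s * ps n + t * ps (Suc n) = s' * ps m + t' * ps (Suc m) \<and>
     s * qs n + t * qs (Suc n) = s' * qs m + t' * qs (Suc m)"
  using assms
proof (induction "s + t" arbitrary: s t n rule: less_induct)
  case less
  show ?case
  proof (cases "t \<le> a (Suc n) * s")
    case True
    then show ?thesis using less.prems by blast
  next
    case False
    have "1 * 1 \<le> a (Suc n) * s" using a_Suc_ge_1 less.prems(1) by (rule mult_le_mono)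
    then have "(t - a (Suc n) * s) + s < s + t" "1 \<le> t - a (Suc n) * s" using False by linarith+
    from less.hyps[OF this less.prems(1), of "Suc n"] obtain m s' t' where
      IH: "1 \<le> s'" "1 \<le> t'" "t' \<le> a (Suc m) * s'"
      "(t - a (Suc n) * s) * ps (Suc n) + s * ps (Suc (Suc n)) = s' * ps m + t' * ps (Suc m)"
      "(t - a (Suc n) * s) * qs (Suc n) + s * qs (Suc (Suc n)) = s' * qs m + t' * qs (Suc m)"
      by blast
    have "(t - a (Suc n) * s) * ps (Suc n) + s * ps (Suc (Suc n)) = s * ps n + t * ps (Suc n)"
      "(t - a (Suc n) * s) * qs (Suc n) + s * qs (Suc (Suc n)) = s * qs n + t * qs (Suc n)"
      using False by (simp_all add: algebra_simps diff_mult_distrib)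
    with IH show ?thesis by metis
  qed
qed

lemma blk_dominates_lattice_point:
  assumes s: "1 \<le> s" and t: "1 \<le> t" and ta: "t < a (Suc m) * s"
  shows "\<exists>i < blk_len m. blk_q m i \<le> s * qs m + t * qs (Suc m) \<and>
    blk_err m i \<le> real s * err m - real t * err (Suc m)"
proof -
  let ?a = "a (Suc m)"
  have dist: "real s * err m - real t * err (Suc m)
      = (real ?a * real s - real t) * err (Suc m) + real s * err (Suc (Suc m))"
    using err_rec[of m] by (simp add: algebra_simps)
  have "real t + 1 \<le> real (?a * s)" using ta by linarith
  then have gap: "1 \<le> real ?a * real s - real t" by simp
  have err_pos1: "0 < err (Suc m)" and err_pos2: "0 < err (Suc (Suc m))" using err_pos by auto
  have s_err2: "err (Suc (Suc m)) \<le> real s * err (Suc (Suc m))" using s err_pos2 by simp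
  show ?thesis
  proof (cases "2 \<le> ?a")
    case True
    define j where "j = min t (?a - 1)"
    have j: "1 \<le> j" "j \<le> t" "j < ?a" using t True by (auto simp: j_def)
    have "blk_q m (j - 1) = qs m + j * qs (Suc m)" using True j by (simp add: blk_q_def)
    also have "\<dots> \<le> s * qs m + t * qs (Suc m)" using s j by (intro add_mono mult_le_mono) auto
    finally have q_le: "blk_q m (j - 1) \<le> s * qs m + t * qs (Suc m)" .
    have "(real ?a - real j) * err (Suc m) \<le> (real ?a * real s - real t) * err (Suc m)"
    proof (cases "j = t")
      case True
      have "real ?a * 1 \<le> real ?a * real s" using s by (intro mult_left_mono) auto
      then show ?thesis using True err_pos1 by (intro mult_right_mono) auto
    next
      case False
      then have "real ?a - real j = 1" using \<open>2 \<le> ?a\<close> by (simp add: j_def min_def split: if_splits)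
      then show ?thesis using gap err_pos1 by simp
    qed
    then have "blk_err m (j - 1) \<le> real s * err m - real t * err (Suc m)"
      using True j s_err2 err_rec[of m] dist by (simp add: blk_err_def algebra_simps)
    moreover have "j - 1 < blk_len m" using j True by (simp add: blk_len_def)
    ultimately show ?thesis using q_le by blast
  next
    case False
    then have a1: "?a = 1" using a_Suc_ge_1[of m] by simp
    then have s2: "2 \<le> s" using ta t by simp
    have "blk_q m 0 = 2 * qs m + 1 * qs (Suc m)" using a1 by (simp add: blk_q_def)
    also have "\<dots> \<le> s * qs m + t * qs (Suc m)" using s2 t by (intro add_mono mult_le_mono) auto
    finally have q_le: "blk_q m 0 \<le> s * qs m + t * qs (Suc m)" .
    have "blk_err m 0 = 1 * err (Suc m) + 2 * err (Suc (Suc m))"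
      using a1 err_rec[of m] by (simp add: blk_err_def)
    also have "\<dots> \<le> (real ?a * real s - real t) * err (Suc m) + real s * err (Suc (Suc m))"
      using gap s2 err_pos1 err_pos2 by (intro add_mono mult_right_mono) auto
    finally show ?thesis using q_le dist blk_len_pos[of m] by auto
  qed
qed

lemma blk_err_0_0_le: "blk_err 0 0 \<le> 1 + \<alpha>"
proof -
  have err1: "err 1 = \<alpha>" by (simp add: err_def)
  show ?thesis
  proof (cases "2 \<le> a 1")
    case True
    then show ?thesis using err1 pos by (simp add: blk_err_def)
  next
    case False
    then have "a 1 = 1" using a_Suc_ge_1[of 0] by simp
    then show ?thesis using err1 err_rec[of 0] err_Suc_less[of 1] by (simp add: blk_err_def numeral_2_eq_2)
  qed
qed

lemma non_convergent_dominated: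
  fixes p q :: int
  assumes q: "1 \<le> q" and nc: "non_convergent p q"
  shows "\<exists>m i. i < blk_len m \<and> int (blk_q m i) \<le> q \<and> blk_err m i \<le> \<bar>real_of_int q * \<alpha> - real_of_int p\<bar>"
proof -
  consider "p \<le> -1" | "p = 0" | "1 \<le> p" by linarith
  then show ?thesis
  proof cases
    case 1
    text \<open>Then \<open>|q\<alpha> - p| \<ge> 1 + \<alpha>\<close>, which beats the first entry \<open>1\<close> of \<open>C_1\<close>.\<close>
    have "1 * \<alpha> \<le> real_of_int q * \<alpha>" using q pos by (intro mult_right_mono) auto
    then have "blk_err 0 0 \<le> \<bar>real_of_int q * \<alpha> - real_of_int p\<bar>" using 1 blk_err_0_0_le by simp
    moreover have "blk_q 0 0 = 1" by (simp add: blk_q_def)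
    ultimately show ?thesis using q blk_len_pos[of 0] by (intro exI[of _ 0]) auto
  next
    case 2
    then have False using nc by (auto simp: non_convergent_def cf_p_def cf_q_def dest: spec[of _ 0])
    then show ?thesis ..
  next
    case 3
    define s t where "s = nat p" and "t = nat q"
    then have st: "p = int s" "q = int t" "1 \<le> s" "1 \<le> t" using 3 q by auto
    from lattice_point_reduce[OF st(3,4), of 0] obtain m s' t' where
      red: "1 \<le> s'" "1 \<le> t'" "t' \<le> a (Suc m) * s'"
      "s = s' * ps m + t' * ps (Suc m)" "t = s' * qs m + t' * qs (Suc m)"
      by auto
    have lt: "t' < a (Suc m) * s'"
    proof (rule ccontr)
      assume "\<not> t' < a (Suc m) * s'"
      then have "t' = a (Suc m) * s'" using red(3) by simp
      then have "s = s' * ps (Suc (Suc m))" "t = s' * qs (Suc (Suc m))"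
        using red(4,5) by (simp_all add: algebra_simps)
      then have "real_of_int p / real_of_int q = real (cf_p \<alpha> (Suc m)) / real (cf_q \<alpha> (Suc m))"
        using st red(1) by (simp add: cf_p_def cf_q_def)
      then show False using nc by (auto simp: non_convergent_def)
    qed
    have "real t' * err (Suc m) \<le> real (a (Suc m) * s') * err (Suc m)"
      using red(3) err_pos[of "Suc m"] by (intro mult_right_mono) (simp only: of_nat_le_iff, simp)
    also have "\<dots> = real s' * (real (a (Suc m)) * err (Suc m))" by simp
    also have "\<dots> \<le> real s' * err m" using err_rec[of m] err_pos[of "Suc (Suc m)"] by (intro mult_left_mono) auto
    finally have "\<bar>real_of_int q * \<alpha> - real_of_int p\<bar> = real s' * err m - real t' * err (Suc m)"
      using lattice_dist st red by simp
    moreover obtain i where "i < blk_len m" "blk_q m i \<le> t"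
      "blk_err m i \<le> real s' * err m - real t' * err (Suc m)"
      using blk_dominates_lattice_point[OF red(1,2) lt] red(5) by auto
    ultimately show ?thesis using st by auto
  qed
qed

abbreviation "Cseq \<equiv> concat_C \<alpha>"

definition blk_start :: "nat \<Rightarrow> nat" where
  "blk_start n = (\<Sum>j<n. blk_len j)"

definition errseq :: "nat \<Rightarrow> real" where
  "errseq k = flat (smap (\<lambda>m. map (blk_err m) [0..<blk_len m]) (fromN 0)) !! k"

lemma concat_C_blk_start:
  assumes "i < blk_len n"
  shows "Cseq (blk_start n + i) = blk_q n i"
proof -
  have len: "length (block_C \<alpha> (Suc m)) = blk_len m" for m
    by (simp add: block_C_def blk_len_def)
  have nth: "block_C \<alpha> (Suc n) ! i = blk_q n i"
    using assms by (auto simp: block_C_def blk_len_def blk_q_def)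
  have "block_C \<alpha> j \<noteq> []" for j by (simp add: block_C_def)
  from snth_flat_smap_fromN[of "block_C \<alpha>", OF this, of i 1 n]
  have "flat (smap (block_C \<alpha>) (fromN 1)) !! ((\<Sum>j<n. length (block_C \<alpha> (1 + j))) + i)
      = block_C \<alpha> (1 + n) ! i"
    using assms by (simp add: len)
  then show ?thesis by (simp add: concat_C_def blk_start_def len nth)
qed

lemma errseq_blk_start:
  assumes "i < blk_len n"
  shows "errseq (blk_start n + i) = blk_err n i"
proof -
  let ?f = "\<lambda>m. map (blk_err m) [0..<blk_len m]"
  have "?f j \<noteq> []" for j using blk_len_pos[of j] by simp
  from snth_flat_smap_fromN[of ?f, OF this, of i 0 n] show ?thesis
    using assms by (simp add: errseq_def blk_start_def)
qed

lemma blk_start_cover: "\<exists>n i. i < blk_len n \<and> k = blk_start n + i"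
proof (induction k)
  case 0
  show ?case using blk_len_pos[of 0] by (intro exI[of _ 0]) (simp add: blk_start_def)
next
  case (Suc k)
  then obtain n i where ni: "i < blk_len n" "k = blk_start n + i" by blast
  show ?case
  proof (cases "Suc i < blk_len n")
    case True
    then show ?thesis using ni by (intro exI[of _ n] exI[of _ "Suc i"]) simp
  next
    case False
    then have "Suc k = blk_start (Suc n) + 0" using ni by (simp add: blk_start_def)
    then show ?thesis using blk_len_pos[of "Suc n"] by blast
  qed
qed

lemma blk_step_within:
  assumes "Suc i < blk_len n"
  shows "blk_q n i < blk_q n (Suc i) \<and> blk_err n (Suc i) < blk_err n i"
proof -
  have "2 \<le> a (Suc n)" using assms by (simp add: blk_len_def split: if_splits)
  then show ?thesis using qs_Suc_ge_1[of n] err_pos[of "Suc n"]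
    by (simp add: blk_q_def blk_err_def algebra_simps)
qed

lemma blk_step_across:
  "blk_q n (blk_len n - 1) \<le> blk_q (Suc n) 0 \<and> blk_err (Suc n) 0 < blk_err n (blk_len n - 1)"
proof -
  have "blk_q n (blk_len n - 1) \<le> qs (Suc n) + qs (Suc (Suc n)) \<and>
      err (Suc n) + err (Suc (Suc n)) \<le> blk_err n (blk_len n - 1)"
  proof (cases "2 \<le> a (Suc n)")
    case True
    then have i: "Suc (blk_len n - 1) = a (Suc n) - 1" by (simp add: blk_len_def)
    have "(a (Suc n) - 1) * qs (Suc n) \<le> a (Suc n) * qs (Suc n)" by simp
    moreover have "real (a (Suc n) - 1) = real (a (Suc n)) - 1" using True by (simp add: of_nat_diff)
    ultimately show ?thesis using True i err_rec[of n]
      by (simp add: blk_q_def blk_err_def algebra_simps)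
  next
    case False
    then have "a (Suc n) = 1" using a_Suc_ge_1[of n] by simp
    then show ?thesis using err_rec[of n] qs_le_Suc[of n] err_pos[of "Suc (Suc n)"]
      by (simp add: blk_len_def blk_q_def blk_err_def)
  qed
  moreover have "qs (Suc n) + qs (Suc (Suc n)) \<le> blk_q (Suc n) 0" by (simp add: blk_q_def)
  moreover have "blk_err (Suc n) 0 < err (Suc n) + err (Suc (Suc n))"
  proof (cases "2 \<le> a (Suc (Suc n))")
    case True
    then show ?thesis using err_pos[of "Suc (Suc n)"] by (simp add: blk_err_def)
  next
    case False
    then have "a (Suc (Suc n)) = 1" using a_Suc_ge_1[of "Suc n"] by simp
    then show ?thesis using err_rec[of "Suc n"] err_Suc_less[of "Suc (Suc n)"] by (simp add: blk_err_def)
  qed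
  ultimately show ?thesis by linarith
qed

lemma concat_C_errseq_step: "Cseq k \<le> Cseq (Suc k) \<and> errseq (Suc k) < errseq k"
proof -
  obtain n i where ni: "i < blk_len n" "k = blk_start n + i" using blk_start_cover by blast
  show ?thesis
  proof (cases "Suc i < blk_len n")
    case True
    then have "Suc k = blk_start n + Suc i" using ni by simp
    then show ?thesis using ni blk_step_within[OF True] concat_C_blk_start[OF True]
      errseq_blk_start[OF True] concat_C_blk_start[OF ni(1)] errseq_blk_start[OF ni(1)] by simp
  next
    case False
    then have i: "i = blk_len n - 1" using ni by simp
    have "Suc k = blk_start (Suc n) + 0" using ni False by (simp add: blk_start_def)
    then show ?thesis using ni i blk_step_across[of n] blk_len_pos[of "Suc n"]
      concat_C_blk_start[of i n] errseq_blk_start[of i n]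
      concat_C_blk_start[of 0 "Suc n"] errseq_blk_start[of 0 "Suc n"] by simp
  qed
qed

lemma mono_concat_C: "mono Cseq"
  using concat_C_errseq_step by (simp add: mono_iff_le_Suc)

lemma errseq_less_iff: "errseq l < errseq k \<longleftrightarrow> k < l"
  using lift_Suc_mono_less_iff[of "\<lambda>k. - errseq k" k l] concat_C_errseq_step by simp

lemma concat_C_0: "Cseq 0 = 1"
  using concat_C_blk_start[of 0 0] blk_len_pos[of 0] by (simp add: blk_start_def blk_q_def)

lemma concat_C_ge_1: "1 \<le> Cseq k"
  using monoD[OF mono_concat_C, of 0 k] concat_C_0 by simp

lemma qs_Suc_double_ge: "n + 1 \<le> qs (Suc (2 * n))"
proof (induction n)
  case (Suc n)
  have "Suc (2 * Suc n) = Suc (Suc (Suc (2 * n)))" by simp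
  then have "qs (Suc (2 * Suc n)) = a (Suc (Suc (2 * n))) * qs (Suc (Suc (2 * n))) + qs (Suc (2 * n))"
    using cf_qs.simps(3)[of \<alpha> "Suc (2 * n)"] by simp
  moreover have "1 * 1 \<le> a (Suc (Suc (2 * n))) * qs (Suc (Suc (2 * n)))"
    by (rule mult_le_mono[OF a_Suc_ge_1 qs_Suc_ge_1])
  ultimately show ?case using Suc by linarith
qed simp

lemma concat_C_blk_start_ge: "n + 1 \<le> Cseq (blk_start (2 * n))"
  using concat_C_blk_start[of 0 "2 * n"] blk_len_pos[of "2 * n"] qs_Suc_double_ge[of n]
  by (simp add: blk_q_def)

lemma infinite_range_concat_C: "infinite (range Cseq)"
proof
  assume "finite (range Cseq)"
  then obtain B where "\<forall>x \<in> range Cseq. x \<le> B" using finite_nat_set_iff_bounded_le by blast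
  then have "Cseq (blk_start (2 * B)) \<le> B" by simp
  then show False using concat_C_blk_start_ge[of B] by simp
qed

section \<open>The discontinuities of \<open>psi2star\<close>\<close>

definition last_index :: "nat \<Rightarrow> nat" where
  "last_index t = Max {k. Cseq k \<le> t}"

lemma finite_concat_C_le: "finite {k. Cseq k \<le> t}"
proof (rule finite_subset)
  show "{k. Cseq k \<le> t} \<subseteq> {..<blk_start (2 * t)}"
  proof (rule subsetI, rule ccontr)
    fix k assume "k \<in> {k. Cseq k \<le> t}" "k \<notin> {..<blk_start (2 * t)}"
    then have "Cseq (blk_start (2 * t)) \<le> t"
      using monoD[OF mono_concat_C, of "blk_start (2 * t)" k] by simp
    then show False using concat_C_blk_start_ge[of t] by simp
  qed
qed simp

lemma concat_C_last_index_le: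
  assumes "1 \<le> t"
  shows "Cseq (last_index t) \<le> t"
proof -
  have "0 \<in> {k. Cseq k \<le> t}" using concat_C_0 assms by simp
  then have "last_index t \<in> {k. Cseq k \<le> t}"
    unfolding last_index_def using finite_concat_C_le by (intro Max_in) auto
  then show ?thesis by simp
qed

lemma le_last_index: "Cseq k \<le> t \<Longrightarrow> k \<le> last_index t"
  unfolding last_index_def using finite_concat_C_le by (intro Max_ge) auto

lemma psi2star_eq:
  assumes t: "1 \<le> t"
  shows "psi2star \<alpha> (real t) = errseq (last_index t)"
  unfolding psi2star_def
proof (rule cInf_eq_minimum)
  obtain n i where ni: "i < blk_len n" "last_index t = blk_start n + i" using blk_start_cover by blast
  obtain p where "non_convergent p (int (blk_q n i))" "\<bar>real (blk_q n i) * \<alpha> - real_of_int p\<bar> = blk_err n i"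
    using blk_attained[OF ni(1)] by blast
  then have p: "non_convergent p (int (Cseq (last_index t)))"
    "\<bar>real (Cseq (last_index t)) * \<alpha> - real_of_int p\<bar> = errseq (last_index t)"
    using ni(2) concat_C_blk_start[OF ni(1)] errseq_blk_start[OF ni(1)] by simp_all
  show "errseq (last_index t) \<in> {\<bar>real_of_int q * \<alpha> - real_of_int p\<bar> | p q :: int.
      1 \<le> q \<and> real_of_int q \<le> real t \<and>
      (\<forall>n. real_of_int p / real_of_int q \<noteq> real (cf_p \<alpha> n) / real (cf_q \<alpha> n))}"
    using concat_C_last_index_le[OF t] concat_C_ge_1[of "last_index t"] p unfolding non_convergent_def
    by (intro CollectI exI[of _ p] exI[of _ "int (Cseq (last_index t))"]) simp
next
  fix x assume "x \<in> {\<bar>real_of_int q * \<alpha> - real_of_int p\<bar> | p q :: int.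
      1 \<le> q \<and> real_of_int q \<le> real t \<and>
      (\<forall>n. real_of_int p / real_of_int q \<noteq> real (cf_p \<alpha> n) / real (cf_q \<alpha> n))}"
  then obtain p q :: int where pq: "x = \<bar>real_of_int q * \<alpha> - real_of_int p\<bar>" "1 \<le> q"
    "real_of_int q \<le> real t" "non_convergent p q" unfolding non_convergent_def by blast
  from non_convergent_dominated[OF pq(2,4)] obtain m i where
    mi: "i < blk_len m" "int (blk_q m i) \<le> q" "blk_err m i \<le> x" using pq(1) by blast
  then have "Cseq (blk_start m + i) \<le> t" using pq(3) concat_C_blk_start[OF mi(1)] by linarith
  then have "blk_start m + i \<le> last_index t" by (rule le_last_index)
  then have "errseq (last_index t) \<le> errseq (blk_start m + i)"
    using errseq_less_iff[of "last_index t" "blk_start m + i"]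
    by (cases "blk_start m + i = last_index t") auto
  then show "errseq (last_index t) \<le> x" using mi(3) errseq_blk_start[OF mi(1)] by simp
qed

lemma last_index_less_iff:
  assumes "2 \<le> t"
  shows "last_index (t - 1) < last_index t \<longleftrightarrow> t \<in> range Cseq"
proof
  assume "last_index (t - 1) < last_index t"
  then have "\<not> Cseq (last_index t) \<le> t - 1" using le_last_index[of "last_index t" "t - 1"] by auto
  moreover have "Cseq (last_index t) \<le> t" using concat_C_last_index_le assms by simp
  ultimately have "Cseq (last_index t) = t" by linarith
  then show "t \<in> range Cseq" by (metis rangeI)
next
  assume "t \<in> range Cseq"
  then obtain k where k: "Cseq k = t" by auto
  have "last_index (t - 1) < k"
  proof (rule ccontr)
    assume "\<not> last_index (t - 1) < k"
    then have "Cseq k \<le> Cseq (last_index (t - 1))" using mono_concat_C by (simp add: monoD)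
    moreover have "Cseq (last_index (t - 1)) \<le> t - 1" using concat_C_last_index_le assms by simp
    ultimately show False using k assms by simp
  qed
  also have "k \<le> last_index t" using k le_last_index by simp
  finally show "last_index (t - 1) < last_index t" .
qed

lemma frakX_eq_range: "frakX \<alpha> = range Cseq"
proof (rule set_eqI)
  fix t
  show "t \<in> frakX \<alpha> \<longleftrightarrow> t \<in> range Cseq"
  proof (cases "2 \<le> t")
    case True
    have "real t - 1 = real (t - 1)" using True by (simp add: of_nat_diff)
    then have "t \<in> frakX \<alpha> \<longleftrightarrow> errseq (last_index t) < errseq (last_index (t - 1))"
      using True psi2star_eq[of t] psi2star_eq[of "t - 1"] by (simp add: frakX_def)
    then show ?thesis using last_index_less_iff[OF True] errseq_less_iff by simp
  next
    case False
    then consider "t = 0" | "t = 1" by linarith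
    then show ?thesis
    proof cases
      case 1
      have "0 \<notin> range Cseq" using concat_C_ge_1 by (metis not_one_le_zero rangeE)
      then show ?thesis using 1 by (simp add: frakX_def)
    next
      case 2
      then show ?thesis using concat_C_0 by (auto simp: frakX_def intro: range_eqI[of _ _ 0])
    qed
  qed
qed

end

theorem mainTheorem9:
  fixes \<alpha> :: real
  assumes "\<alpha> \<notin> \<rat>" and "0 < \<alpha>" and "\<alpha> < 1"
  shows "infinite (frakX \<alpha>) \<and> infinite (first_occ (concat_C \<alpha>)) \<and>
         (\<forall>k. concat_C \<alpha> (enumerate (first_occ (concat_C \<alpha>)) k) = enumerate (frakX \<alpha>) k)"
proof -
  interpret irrational_cf \<alpha> using assms by unfold_locales
  show ?thesis
    using frakX_eq_range infinite_range_concat_C infinite_first_occ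
      enumerate_first_occ_mono[OF mono_concat_C infinite_range_concat_C] by simp
qed

end
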